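(* Let $f:\{0,1\}^n\to\{0,1\}$, and consider the following algorithm: (1) choose $k\in\{0,1,\dots,\lceil\log n\rceil\}$ uniformly at random and set $\ell:=2^k$; (2) choose $x\in\{0,1\}^n$ uniformly at random; (3) perform an $\ell$-step random walk $p$ on $H_n$ from $x$, ending at $y$; (4) if $f(x)\ne f(y)$, perform binary search on the vertex sequence of $p$ to find an influential edge $(u,v)$ of $p$, and REJECT if $(u,v)$ is a violating edge; (5) otherwise ACCEPT. Then, conditioned on the length chosen in step (1) being $\ell$, the algorithm rejects with probability $\Omega\!\left(\frac{\ell}{n}\cdot\frac{|F_\ell|}{2^n}\right)$, where $F_\ell$ is the set of edges $(x,y)$ of $H_n$ that are violating and such that both $x$ and $y$ are $\ell$-sticky.
   Context: $H_n$ is the undirected hypercube graph on $\{0,1\}^n$ (edges between points at Hamming distance $1$); a random walk step moves to a uniformly random neighbor. The coordinate-wise partial order is $\prec$. An edge $(x,y)$ is influential if $f(x)\ne f(y)$, and violating if $x\prec y$, $f(x)=1$, $f(y)=0$. A vertex $x$ is $\ell$-sticky if an $\ell$-step random walk on $H_n$ starting from $x$ traverses no influential edge with probability at least $1/2$. Binary search on a walk with vertices $x=z_0,\dots,z_\ell=y$ and $f(z_0)\ne f(z_\ell)$ returns some index $i$ with $f(z_i)\ne f(z_{i+1})$. Logarithms are base 2. *)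

theory Defs
  imports Complex_Main
begin

text \<open>Vertices of H_n: boolean lists of length n (False = 0, True = 1).\<close>
definition cube :: "nat \<Rightarrow> bool list set" where
  "cube n = {x. length x = n}"

definition flip :: "bool list \<Rightarrow> nat \<Rightarrow> bool list" where
  "flip x i = x[i := \<not> x ! i]"

definition hc_edge :: "nat \<Rightarrow> bool list \<Rightarrow> bool list \<Rightarrow> bool" where
  "hc_edge n x y \<longleftrightarrow> x \<in> cube n \<and> (\<exists>i<n. y = flip x i)"

definition cw_le :: "bool list \<Rightarrow> bool list \<Rightarrow> bool" where
  "cw_le x y \<longleftrightarrow> list_all2 (\<le>) x y"

definition influential :: "(bool list \<Rightarrow> bool) \<Rightarrow> bool list \<Rightarrow> bool list \<Rightarrow> bool" where
  "influential f x y \<longleftrightarrow> f x \<noteq> f y"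

definition violating :: "(bool list \<Rightarrow> bool) \<Rightarrow> bool list \<Rightarrow> bool list \<Rightarrow> bool" where
  "violating f x y \<longleftrightarrow> cw_le x y \<and> f x \<and> \<not> f y"

definition violating_edge :: "(bool list \<Rightarrow> bool) \<Rightarrow> bool list \<Rightarrow> bool list \<Rightarrow> bool" where
  "violating_edge f u v \<longleftrightarrow> violating f u v \<or> violating f v u"

text \<open>An l-step random walk on H_n is determined by the sequence of coordinates flipped;
  each of the n^l sequences in {0..<n}^l is equally likely (uniform neighbour at each step).\<close>
definition walks :: "nat \<Rightarrow> nat \<Rightarrow> nat list set" where
  "walks n l = {is. length is = l \<and> set is \<subseteq> {..<n}}"

fun walk_verts :: "bool list \<Rightarrow> nat list \<Rightarrow> bool list list" where
  "walk_verts x [] = [x]"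
| "walk_verts x (i # is) = x # walk_verts (flip x i) is"

definition no_infl_walk :: "(bool list \<Rightarrow> bool) \<Rightarrow> bool list \<Rightarrow> nat list \<Rightarrow> bool" where
  "no_infl_walk f x is \<longleftrightarrow>
     (let zs = walk_verts x is in \<forall>j < length is. \<not> influential f (zs ! j) (zs ! Suc j))"

definition sticky :: "nat \<Rightarrow> (bool list \<Rightarrow> bool) \<Rightarrow> nat \<Rightarrow> bool list \<Rightarrow> bool" where
  "sticky n f l x \<longleftrightarrow>
     real (card {is \<in> walks n l. no_infl_walk f x is}) / real n ^ l \<ge> 1 / 2"

definition F_set :: "nat \<Rightarrow> (bool list \<Rightarrow> bool) \<Rightarrow> nat \<Rightarrow> (bool list \<times> bool list) set" where
  "F_set n f l = {(x, y). hc_edge n x y \<and> violating f x y \<and> sticky n f l x \<and> sticky n f l y}"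

text \<open>A binary-search procedure bs (applied to the vertex sequence z_0..z_l of a walk) is valid
  if, whenever f(z_0) \<noteq> f(z_l), it returns an index i < l with f(z_i) \<noteq> f(z_(i+1)).\<close>
definition valid_bs :: "nat \<Rightarrow> (bool list \<Rightarrow> bool) \<Rightarrow> nat \<Rightarrow> (bool list list \<Rightarrow> nat) \<Rightarrow> bool" where
  "valid_bs n f l bs \<longleftrightarrow>
     (\<forall>x \<in> cube n. \<forall>is \<in> walks n l.
        let zs = walk_verts x is in
        f (hd zs) \<noteq> f (last zs) \<longrightarrow>
          bs zs < l \<and> f (zs ! bs zs) \<noteq> f (zs ! Suc (bs zs)))"

definition rejects :: "(bool list \<Rightarrow> bool) \<Rightarrow> (bool list list \<Rightarrow> nat) \<Rightarrow> bool list \<Rightarrow> nat list \<Rightarrow> bool" where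
  "rejects f bs x is \<longleftrightarrow>
     (let zs = walk_verts x is in
        f (hd zs) \<noteq> f (last zs) \<and> violating_edge f (zs ! bs zs) (zs ! Suc (bs zs)))"

definition rej_prob :: "nat \<Rightarrow> (bool list \<Rightarrow> bool) \<Rightarrow> (bool list list \<Rightarrow> nat) \<Rightarrow> nat \<Rightarrow> real" where
  "rej_prob n f bs l =
     real (card {(x, is). x \<in> cube n \<and> is \<in> walks n l \<and> rejects f bs x is})
     / (2 ^ n * real n ^ l)"

end

theory Submission imports Defs begin

text \<open>For every violating edge (u, v) with both endpoints l-sticky and every split
  j + 1 + (l - 1 - j) = l, glue a walk of length j from u that traverses no influential edge,
  run backwards, the edge (u, v), and such a walk of length l - 1 - j from v. The glued l-step
  walk has exactly one influential edge, so binary search must return (u, v) and the algorithm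
  rejects. Gluing is injective, since the position of that edge recovers the split, and
  stickiness provides at least n^m/2 such walks of each length m \<le> l, so there are at least
  |F_l| l n^(l-1)/4 rejecting runs among the 2^n n^l equally likely ones.\<close>

fun walk_end :: "bool list \<Rightarrow> nat list \<Rightarrow> bool list" where
  "walk_end x [] = x"
| "walk_end x (i # p) = walk_end (flip x i) p"

lemma length_walk_verts [simp]: "length (walk_verts x p) = Suc (length p)"
  by (induction p arbitrary: x) auto

lemma walk_verts_nth_0 [simp]: "walk_verts x p ! 0 = x"
  by (cases p) auto

lemma walk_verts_not_Nil [simp]: "walk_verts x p \<noteq> []"
  by (cases p) auto

lemma hd_walk_verts [simp]: "hd (walk_verts x p) = x"
  by (cases p) auto

lemma start_in_walk_verts [simp]: "x \<in> set (walk_verts x p)"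
  by (cases p) auto

lemma last_walk_verts [simp]: "last (walk_verts x p) = walk_end x p"
  by (induction p arbitrary: x) auto

lemma flip_flip [simp]: "flip (flip x i) i = x"
  unfolding flip_def by (cases "i < length x") (auto simp: list_update_beyond)

lemma length_flip [simp]: "length (flip x i) = length x"
  by (simp add: flip_def)

lemma flip_eq_flip_iff: "i < length x \<Longrightarrow> i' < length x \<Longrightarrow> flip x i = flip x i' \<longleftrightarrow> i = i'"
  unfolding flip_def by (metis nth_list_update_eq nth_list_update_neq)

lemma length_walk_end [simp]: "length (walk_end x p) = length x"
  by (induction p arbitrary: x) auto

lemma walk_end_append: "walk_end x (p @ q) = walk_end (walk_end x p) q"
  by (induction p arbitrary: x) auto

lemma walk_end_rev [simp]: "walk_end (walk_end x p) (rev p) = x"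
  by (induction p arbitrary: x) (auto simp: walk_end_append)

lemma walk_verts_append:
  "walk_verts x (p @ q) = butlast (walk_verts x p) @ walk_verts (walk_end x p) q"
  by (induction p arbitrary: x) auto

lemma walk_verts_snoc: "walk_verts x (p @ [i]) = walk_verts x p @ [flip (walk_end x p) i]"
  by (induction p arbitrary: x) auto

lemma walk_verts_rev: "walk_verts (walk_end x p) (rev p) = rev (walk_verts x p)"
  by (induction p arbitrary: x) (auto simp: walk_verts_snoc walk_end_append)

lemma walk_verts_take: "walk_verts x (take m p) = take (Suc m) (walk_verts x p)"
  by (induction p arbitrary: x m) (auto simp: take_Cons')

lemma walks_eq_lists: "walks n m = {p. set p \<subseteq> {..<n} \<and> length p = m}"
  by (auto simp: walks_def)

lemma finite_walks [simp]: "finite (walks n m)"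
  unfolding walks_eq_lists by (rule finite_lists_length_eq) simp

lemma card_walks [simp]: "card (walks n m) = n ^ m"
  unfolding walks_eq_lists by (subst card_lists_length_eq) simp_all

lemma finite_cube: "finite (cube n)"
proof -
  have "cube n = {x. set x \<subseteq> (UNIV :: bool set) \<and> length x = n}"
    by (auto simp: cube_def)
  then show ?thesis
    using finite_lists_length_eq[of "UNIV :: bool set" n] by simp
qed

subsection \<open>Walks that traverse no influential edge\<close>

definition stable_walk :: "(bool list \<Rightarrow> bool) \<Rightarrow> bool list \<Rightarrow> nat list \<Rightarrow> bool" where
  "stable_walk f x p \<longleftrightarrow> (\<forall>z \<in> set (walk_verts x p). f z = f x)"

definition stable_walks :: "nat \<Rightarrow> (bool list \<Rightarrow> bool) \<Rightarrow> bool list \<Rightarrow> nat \<Rightarrow> nat list set" where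
  "stable_walks n f x m = {p \<in> walks n m. stable_walk f x p}"

lemma finite_stable_walks [simp]: "finite (stable_walks n f x m)"
  by (simp add: stable_walks_def)

lemma no_infl_walk_Cons:
  "no_infl_walk f x (i # p) \<longleftrightarrow> f x = f (flip x i) \<and> no_infl_walk f (flip x i) p"
  unfolding no_infl_walk_def Let_def influential_def
  by (simp add: All_less_Suc2)

lemma no_infl_walk_iff_stable_walk: "no_infl_walk f x p \<longleftrightarrow> stable_walk f x p"
proof (induction p arbitrary: x)
  case Nil
  then show ?case by (simp add: no_infl_walk_def stable_walk_def)
next
  case (Cons i p)
  then show ?case
    by (auto simp: no_infl_walk_Cons stable_walk_def)
qed

lemma stable_walk_take: "stable_walk f x p \<Longrightarrow> stable_walk f x (take m p)"
  unfolding stable_walk_def walk_verts_take by (meson in_set_takeD)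

text \<open>The prefixes of the walks witnessing stickiness stay stable, and each prefix of length m
  extends in n^(l-m) ways.\<close>
lemma card_stable_walks_ge:
  assumes "sticky n f l x" "m \<le> l" "n \<ge> 1"
  shows "real n ^ m / 2 \<le> real (card (stable_walks n f x m))"
proof -
  define A where "A = stable_walks n f x m"
  define Q where "Q = {q \<in> walks n l. no_infl_walk f x q}"
  have "Q \<subseteq> (\<lambda>(p, t). p @ t) ` (A \<times> walks n (l - m))"
  proof
    fix q assume q: "q \<in> Q"
    then have "take m q \<in> A"
      using assms(2) stable_walk_take[of f x q m]
      by (auto simp: Q_def A_def stable_walks_def walks_def no_infl_walk_iff_stable_walk
          dest: in_set_takeD)
    moreover have "drop m q \<in> walks n (l - m)"
      using q by (auto simp: Q_def walks_def dest: in_set_dropD)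
    ultimately show "q \<in> (\<lambda>(p, t). p @ t) ` (A \<times> walks n (l - m))"
      by (intro image_eqI[of _ _ "(take m q, drop m q)"]) simp_all
  qed
  then have "card Q \<le> card ((\<lambda>(p, t). p @ t) ` (A \<times> walks n (l - m)))"
    by (intro card_mono) (simp_all add: A_def)
  also have "\<dots> \<le> card A * n ^ (l - m)"
    using card_image_le[of "A \<times> walks n (l - m)"] by (simp add: A_def card_cartesian_product)
  finally have "real (card Q) \<le> real (card A) * real n ^ (l - m)"
    by (metis of_nat_le_iff of_nat_mult of_nat_power)
  moreover have "real n ^ l \<le> 2 * real (card Q)"
    using assms(1,3) by (simp add: sticky_def Q_def divide_le_eq)
  moreover have "real n ^ l = real n ^ m * real n ^ (l - m)"
    using assms(2) by (simp flip: power_add)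
  ultimately have "real n ^ m * real n ^ (l - m) \<le> (2 * real (card A)) * real n ^ (l - m)"
    by linarith
  then have "real n ^ m \<le> 2 * real (card A)"
    by (rule mult_right_le_imp_le) (use assms(3) in simp)
  then show ?thesis
    by (simp add: A_def)
qed

subsection \<open>Gluing two stable walks along an edge\<close>

lemma walk_verts_glued:
  "walk_verts (walk_end u p) (rev p @ i # s) = rev (walk_verts u p) @ walk_verts (flip u i) s"
proof -
  have "rev (walk_verts u p) = butlast (rev (walk_verts u p)) @ [u]"
    by (metis append_butlast_last_id hd_walk_verts last_rev rev_is_Nil_conv walk_verts_not_Nil)
  then show ?thesis
    by (simp add: walk_verts_append walk_verts_rev)
qed

lemma glued_walk_nth:
  assumes "stable_walk f u p" "stable_walk f (flip u i) s" "b \<le> length p + length s + 1"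
  defines "zs \<equiv> walk_verts (walk_end u p) (rev p @ i # s)"
  shows "f (zs ! b) = (if b \<le> length p then f u else f (flip u i))"
proof (cases "b \<le> length p")
  case True
  then have "zs ! b = rev (walk_verts u p) ! b"
    by (simp add: zs_def walk_verts_glued nth_append)
  moreover have "rev (walk_verts u p) ! b \<in> set (rev (walk_verts u p))"
    using True by (intro nth_mem) simp
  ultimately have "zs ! b \<in> set (walk_verts u p)"
    by (metis set_rev)
  then have "f (zs ! b) = f u"
    using assms(1) unfolding stable_walk_def by blast
  then show ?thesis
    using True by simp
next
  case False
  then have "zs ! b = walk_verts (flip u i) s ! (b - Suc (length p))"
    by (simp add: zs_def walk_verts_glued nth_append)
  moreover have "walk_verts (flip u i) s ! (b - Suc (length p)) \<in> set (walk_verts (flip u i) s)"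
    using False assms(3) by (intro nth_mem) simp
  ultimately have "zs ! b \<in> set (walk_verts (flip u i) s)"
    by simp
  then have "f (zs ! b) = f (flip u i)"
    using assms(2) unfolding stable_walk_def by blast
  then show ?thesis
    using False by simp
qed

lemma glued_walk_at_edge:
  "walk_verts (walk_end u p) (rev p @ i # s) ! length p = u"
  "walk_verts (walk_end u p) (rev p @ i # s) ! Suc (length p) = flip u i"
  by (simp_all add: walk_verts_glued nth_append rev_nth)

lemma glued_walk_influential_index:
  assumes "stable_walk f u p" "stable_walk f (flip u i) s"
    and "b < length p + length s + 1"
    and "f (walk_verts (walk_end u p) (rev p @ i # s) ! b)
           \<noteq> f (walk_verts (walk_end u p) (rev p @ i # s) ! Suc b)"
  shows "b = length p"
  using glued_walk_nth[OF assms(1,2), of b] glued_walk_nth[OF assms(1,2), of "Suc b"] assms(3,4)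
  by (auto split: if_splits)

lemma glued_walk_in_walks:
  "p \<in> walks n j \<Longrightarrow> s \<in> walks n (l - 1 - j) \<Longrightarrow> j < l \<Longrightarrow> i < n \<Longrightarrow> rev p @ i # s \<in> walks n l"
  by (auto simp: walks_def)

lemma glued_walk_rejects:
  assumes "valid_bs n f l bs" "u \<in> cube n" "i < n" "violating f u (flip u i)"
    and "stable_walk f u p" "stable_walk f (flip u i) s"
    and "p \<in> walks n j" "s \<in> walks n (l - 1 - j)" "j < l"
  shows "rejects f bs (walk_end u p) (rev p @ i # s)"
proof -
  define zs where "zs = walk_verts (walk_end u p) (rev p @ i # s)"
  have lengths: "length p + length s + 1 = l"
    using assms(7-9) by (simp add: walks_def)
  have edge_infl: "f u \<noteq> f (flip u i)"
    using assms(4) by (auto simp: violating_def)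
  have "f (hd zs) = f u"
    using glued_walk_nth[OF assms(5,6), of 0] by (simp add: zs_def hd_conv_nth)
  moreover have "f (last zs) = f (flip u i)"
    using glued_walk_nth[OF assms(5,6), of l] lengths
    by (simp add: zs_def last_conv_nth del: last_walk_verts)
  ultimately have ends_differ: "f (hd zs) \<noteq> f (last zs)"
    using edge_infl by simp
  moreover have "walk_end u p \<in> cube n"
    using assms(2) by (simp add: cube_def)
  ultimately have "bs zs < l \<and> f (zs ! bs zs) \<noteq> f (zs ! Suc (bs zs))"
    using assms(1) glued_walk_in_walks[OF assms(7-9,3)]
    unfolding valid_bs_def zs_def Let_def by blast
  then have "bs zs = length p"
    using glued_walk_influential_index[OF assms(5,6)] lengths by (simp add: zs_def)
  then show ?thesis
    using ends_differ assms(4) glued_walk_at_edge[of u p i s]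
    by (simp add: rejects_def violating_edge_def zs_def)
qed

lemma glued_walk_inj:
  assumes "stable_walk f u p" "stable_walk f (flip u i) s" "f u \<noteq> f (flip u i)"
    and "stable_walk f u' p'" "stable_walk f (flip u' i') s'" "f u' \<noteq> f (flip u' i')"
    and "length p + length s = length p' + length s'"
    and "walk_end u p = walk_end u' p'" "rev p @ i # s = rev p' @ i' # s'"
  shows "u = u' \<and> i = i' \<and> p = p' \<and> s = s'"
proof -
  define zs where "zs = walk_verts (walk_end u p) (rev p @ i # s)"
  have zs': "zs = walk_verts (walk_end u' p') (rev p' @ i' # s')"
    using assms(8,9) by (simp add: zs_def)
  have "f (zs ! length p) \<noteq> f (zs ! Suc (length p))"
    using assms(3) glued_walk_at_edge[of u p i s] by (simp add: zs_def)
  then have same_length: "length p = length p'"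
    using glued_walk_influential_index[OF assms(4,5), of "length p"] assms(7) zs' by simp
  then have "u = u'"
    using glued_walk_at_edge(1)[of u p i s] glued_walk_at_edge(1)[of u' p' i' s'] zs'
    by (simp add: zs_def)
  moreover have "rev p = rev p' \<and> i # s = i' # s'"
    using assms(9) same_length by (simp add: append_eq_append_conv)
  ultimately show ?thesis
    by simp
qed

definition rejecting_runs :: "nat \<Rightarrow> (bool list \<Rightarrow> bool) \<Rightarrow> (bool list list \<Rightarrow> nat) \<Rightarrow> nat
    \<Rightarrow> (bool list \<times> nat list) set" where
  "rejecting_runs n f bs l = {(x, is). x \<in> cube n \<and> is \<in> walks n l \<and> rejects f bs x is}"

lemma finite_rejecting_runs: "finite (rejecting_runs n f bs l)"
  by (rule finite_subset[of _ "cube n \<times> walks n l"]) (auto simp: rejecting_runs_def finite_cube)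

lemma rej_prob_eq: "rej_prob n f bs l = real (card (rejecting_runs n f bs l)) / (2 ^ n * real n ^ l)"
  by (simp add: rej_prob_def rejecting_runs_def)

lemma card_rejecting_runs_ge:
  assumes "valid_bs n f l bs" "finite E"
    and "\<And>u i. (u, i) \<in> E \<Longrightarrow> u \<in> cube n \<and> i < n \<and> violating f u (flip u i)"
  shows "(\<Sum>(u, i)\<in>E. \<Sum>j<l. card (stable_walks n f u j) * card (stable_walks n f (flip u i) (l - 1 - j)))
           \<le> card (rejecting_runs n f bs l)"
proof -
  define D where "D = (SIGMA e:E. SIGMA j:{..<l}.
    stable_walks n f (fst e) j \<times> stable_walks n f (flip (fst e) (snd e)) (l - 1 - j))"
  define g :: "(bool list \<times> nat) \<times> nat \<times> nat list \<times> nat list \<Rightarrow> bool list \<times> nat list"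
    where "g = (\<lambda>((u, i), (j, (p, s))). (walk_end u p, rev p @ i # s))"
  have glued: "u \<in> cube n \<and> i < n \<and> violating f u (flip u i) \<and> f u \<noteq> f (flip u i) \<and> j < l
      \<and> stable_walk f u p \<and> stable_walk f (flip u i) s \<and> p \<in> walks n j \<and> s \<in> walks n (l - 1 - j)"
    if "((u, i), (j, (p, s))) \<in> D" for u i j p s
    using that assms(3)[of u i] by (auto simp: D_def stable_walks_def violating_def)
  have "g d \<in> rejecting_runs n f bs l" if "d \<in> D" for d
  proof -
    obtain u i j p s where d: "d = ((u, i), (j, (p, s)))"
      by (metis prod.exhaust)
    note facts = glued[OF that[unfolded d]]
    have "rejects f bs (walk_end u p) (rev p @ i # s)"
      using facts by (intro glued_walk_rejects[OF assms(1), where j = j]) simp_all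
    moreover have "walk_end u p \<in> cube n"
      using facts by (simp add: cube_def)
    moreover have "rev p @ i # s \<in> walks n l"
      using facts by (intro glued_walk_in_walks[of p n j s l i]) simp_all
    ultimately show ?thesis
      by (simp add: d g_def rejecting_runs_def)
  qed
  then have "g ` D \<subseteq> rejecting_runs n f bs l"
    by blast
  moreover have "inj_on g D"
  proof (rule inj_onI)
    fix d d' assume dD: "d \<in> D" "d' \<in> D" and "g d = g d'"
    obtain u i j p s where d: "d = ((u, i), (j, (p, s)))"
      by (metis prod.exhaust)
    obtain u' i' j' p' s' where d': "d' = ((u', i'), (j', (p', s')))"
      by (metis prod.exhaust)
    have "walk_end u p = walk_end u' p'" "rev p @ i # s = rev p' @ i' # s'"
      using \<open>g d = g d'\<close> by (simp_all add: d d' g_def)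
    moreover note facts = glued[OF dD(1)[unfolded d]] glued[OF dD(2)[unfolded d']]
    ultimately have "u = u' \<and> i = i' \<and> p = p' \<and> s = s'"
      by (intro glued_walk_inj[of f u p i s u' p' i' s']) (auto simp: walks_def)
    moreover have "j = j'"
      using facts calculation by (simp add: walks_def)
    ultimately show "d = d'"
      by (simp add: d d')
  qed
  ultimately have "card D \<le> card (rejecting_runs n f bs l)"
    by (intro card_inj_on_le finite_rejecting_runs)
  moreover have "card D = (\<Sum>(u, i)\<in>E. \<Sum>j<l.
      card (stable_walks n f u j) * card (stable_walks n f (flip u i) (l - 1 - j)))"
    using assms(2) by (simp add: D_def card_SigmaI card_cartesian_product finite_SigmaI split_def)
  ultimately show ?thesis
    by simp
qed

lemma card_hc_edges_eq:
  assumes "\<And>x y. (x, y) \<in> S \<Longrightarrow> hc_edge n x y"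
  shows "card S = card {(u, i). i < n \<and> (u, flip u i) \<in> S}"
proof -
  define E where "E = {(u, i). i < n \<and> (u, flip u i) \<in> S}"
  have S_eq: "S = (\<lambda>(u, i). (u, flip u i)) ` E"
    using assms by (fastforce simp: E_def hc_edge_def)
  have "inj_on (\<lambda>(u, i). (u, flip u i)) E"
  proof (rule inj_onI)
    fix a b assume "a \<in> E" "b \<in> E" "(\<lambda>(u, i). (u, flip u i)) a = (\<lambda>(u, i). (u, flip u i)) b"
    then show "a = b"
      using assms by (auto simp: E_def hc_edge_def cube_def flip_eq_flip_iff)
  qed
  then have "card S = card E"
    by (subst S_eq) (rule card_image)
  then show ?thesis
    by (simp only: E_def)
qed

lemma rej_prob_ge:
  assumes "n \<ge> 1" "l \<ge> 1" "valid_bs n f l bs"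
  shows "rej_prob n f bs l \<ge> 1/4 * (real l / real n) * (real (card (F_set n f l)) / 2 ^ n)"
proof -
  define E where "E = {(u, i). i < n \<and> (u, flip u i) \<in> F_set n f l}"
  have E_iff: "(u, i) \<in> E \<longleftrightarrow> u \<in> cube n \<and> i < n \<and> violating f u (flip u i)
      \<and> sticky n f l u \<and> sticky n f l (flip u i)" for u i
    by (auto simp: E_def F_set_def hc_edge_def)
  have card_E: "card (F_set n f l) = card E"
    unfolding E_def by (rule card_hc_edges_eq) (simp add: F_set_def)
  have "finite E"
    by (rule finite_subset[of _ "cube n \<times> {..<n}"]) (auto simp: E_iff finite_cube)
  have pairs: "real n ^ (l - 1) / 4
      \<le> real (card (stable_walks n f u j) * card (stable_walks n f (flip u i) (l - 1 - j)))"
    if "(u, i) \<in> E" "j < l" for u i j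
  proof -
    have "real n ^ (l - 1) / 4 = (real n ^ j / 2) * (real n ^ (l - 1 - j) / 2)"
      using \<open>j < l\<close> by (simp flip: power_add)
    also have "\<dots> \<le> real (card (stable_walks n f u j)) * real (card (stable_walks n f (flip u i) (l - 1 - j)))"
      using that assms(1) E_iff[of u i]
      by (intro mult_mono card_stable_walks_ge[of n f l]) auto
    finally show ?thesis
      by simp
  qed
  have "real (card (F_set n f l)) * real l * real n ^ (l - 1) / 4
      = (\<Sum>(u, i)\<in>E. \<Sum>j<l. real n ^ (l - 1) / 4)"
    by (simp add: card_E split_def)
  also have "\<dots> \<le> (\<Sum>(u, i)\<in>E. \<Sum>j<l.
      real (card (stable_walks n f u j) * card (stable_walks n f (flip u i) (l - 1 - j))))"
  proof (rule sum_mono, clarify)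
    fix u i assume "(u, i) \<in> E"
    then show "(\<Sum>j<l. real n ^ (l - 1) / 4) \<le> (\<Sum>j<l.
        real (card (stable_walks n f u j) * card (stable_walks n f (flip u i) (l - 1 - j))))"
      using pairs by (intro sum_mono) simp
  qed
  also have "\<dots> = real (\<Sum>(u, i)\<in>E. \<Sum>j<l.
      card (stable_walks n f u j) * card (stable_walks n f (flip u i) (l - 1 - j)))"
    by (simp add: split_def)
  also have "\<dots> \<le> real (card (rejecting_runs n f bs l))"
    unfolding of_nat_le_iff
    by (rule card_rejecting_runs_ge[OF assms(3) \<open>finite E\<close>]) (simp add: E_iff)
  finally have "real (card (F_set n f l)) * real l * real n ^ (l - 1) / 4
      \<le> real (card (rejecting_runs n f bs l))" .
  moreover have "real n ^ l = real n * real n ^ (l - 1)"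
    using assms(2) by (simp flip: power_Suc)
  ultimately show ?thesis
    using assms(1) by (simp add: rej_prob_eq field_simps)
qed

text \<open>The bound holds for every walk length l \<ge> 1.\<close>
theorem lemma3p5:
  shows "\<exists>c > (0::real). \<forall>n \<ge> 1. \<forall>f :: bool list \<Rightarrow> bool. \<forall>bs. \<forall>k :: nat.
           int k \<le> \<lceil>log 2 (real n)\<rceil> \<longrightarrow> valid_bs n f (2 ^ k) bs \<longrightarrow>
           rej_prob n f bs (2 ^ k) \<ge> c * (real (2 ^ k) / real n) * (real (card (F_set n f (2 ^ k))) / 2 ^ n)"
proof (intro exI[of _ "1/4"] conjI allI impI)
  fix n :: nat and f bs and k :: nat
  assume "n \<ge> 1" "valid_bs n f (2 ^ k) bs"
  then show "rej_prob n f bs (2 ^ k)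
      \<ge> 1/4 * (real (2 ^ k) / real n) * (real (card (F_set n f (2 ^ k))) / 2 ^ n)"
    using rej_prob_ge[of n "2 ^ k" f bs] by simp
qed simp

end
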